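(* For $S\subseteq\mathbb N$, let $\mathcal H(S)=\{(i,j)\in\mathbb N\times\mathbb N: i+j\in S\}$. The following are equivalent: (1) $\mathcal H(S)$ is Schur bounded; (2) $\mathcal H(S)$ is the union of a row finite set and a column finite set; (3) $\sup_{k\ge0}|S\cap(2^{k-1},2^k]|<\infty$; (4) $S$ is the union of finitely many lacunary sets.
   Context: A pattern $\mathcal P\subseteq\mathbb N\times\mathbb N$ is Schur bounded if every matrix supported on $\mathcal P$ (zero off $\mathcal P$) with all entries of modulus at most $1$ defines a bounded Schur multiplier $T=[t_{ij}]\mapsto[s_{ij}t_{ij}]$ on $\mathcal B(\ell^2)$. A pattern is row finite if there is $k$ with at most $k$ elements of the pattern in each row; column finite is defined analogously. A set $\{s_1<s_2<\cdots\}\subseteq\mathbb N$ is lacunary if there is $q>1$ with $s_{i+1}/s_i>q$ for all $i\ge1$ (finite sets count as lacunary). *)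

theory Defs
  imports "HOL-Analysis.Analysis" "HOL-Library.Infinite_Set"
begin

text \<open>Infinite matrices indexed by nat, complex entries. A matrix T defines a bounded
operator on l2 with norm at most C iff all its finite sections have (bilinear-form) norm at most C.\<close>

definition matrix_bound :: "(nat \<Rightarrow> nat \<Rightarrow> complex) \<Rightarrow> real \<Rightarrow> bool" where
  "matrix_bound T C \<longleftrightarrow>
     (\<forall>n (x::nat \<Rightarrow> complex) (y::nat \<Rightarrow> complex).
        (\<Sum>j<n. (cmod (x j))^2) \<le> 1 \<longrightarrow> (\<Sum>i<n. (cmod (y i))^2) \<le> 1 \<longrightarrow>
        cmod (\<Sum>i<n. \<Sum>j<n. y i * T i j * x j) \<le> C)"

definition bounded_matrix :: "(nat \<Rightarrow> nat \<Rightarrow> complex) \<Rightarrow> bool" where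
  "bounded_matrix T \<longleftrightarrow> (\<exists>C. matrix_bound T C)"

definition bounded_schur_multiplier :: "(nat \<Rightarrow> nat \<Rightarrow> complex) \<Rightarrow> bool" where
  "bounded_schur_multiplier s \<longleftrightarrow>
     (\<exists>K. \<forall>T C. matrix_bound T C \<longrightarrow> matrix_bound (\<lambda>i j. s i j * T i j) (K * C))"

definition schur_bounded :: "(nat \<times> nat) set \<Rightarrow> bool" where
  "schur_bounded P \<longleftrightarrow>
     (\<forall>s. (\<forall>i j. (i, j) \<notin> P \<longrightarrow> s i j = 0) \<longrightarrow> (\<forall>i j. cmod (s i j) \<le> 1)
          \<longrightarrow> bounded_schur_multiplier s)"

definition row_finite :: "(nat \<times> nat) set \<Rightarrow> bool" where
  "row_finite P \<longleftrightarrow> (\<exists>k::nat. \<forall>i. finite {j. (i, j) \<in> P} \<and> card {j. (i, j) \<in> P} \<le> k)"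

definition column_finite :: "(nat \<times> nat) set \<Rightarrow> bool" where
  "column_finite P \<longleftrightarrow> (\<exists>k::nat. \<forall>j. finite {i. (i, j) \<in> P} \<and> card {i. (i, j) \<in> P} \<le> k)"

definition lacunary :: "nat set \<Rightarrow> bool" where
  "lacunary A \<longleftrightarrow> finite A \<or>
     (\<exists>q::real. q > 1 \<and> (\<forall>i. real (enumerate A (Suc i)) > q * real (enumerate A i)))"

definition hankel_pattern :: "nat set \<Rightarrow> (nat \<times> nat) set" where
  "hankel_pattern S = {(i, j). i + j \<in> S}"

end

theory Submission
  imports Defs
begin

(* Write S_k for the dyadic block S \<inter> (2^(k-1), 2^k].
   If every |S_k| is at most M, then the lower triangle j <= i of the Hankel pattern has at most
   2M+1 entries in each row and the strict upper triangle at most 2M+1 entries in each column,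
   and row finite (column finite) patterns are Schur bounded by Cauchy-Schwarz. Moreover any
   2M+1 consecutive elements of S at least double, so the 2M+1 residue classes of the
   enumeration of S are lacunary; conversely a lacunary set meets each block in boundedly many
   points. If the pattern is covered by a row finite and a column finite set, counting the
   pairs (i, j) with i + j in S_k bounds |S_k|.
   Finally, if the |S_k| are unbounded, choose well separated blocks of growing size and on each
   block signs for which, by Khintchine's inequality, the signed exponential sum over the block
   has large L1 norm. The Hankel multiplier with these signs, tested against a Fourier matrix of
   norm one, has norm at least sqrt |S_k| / 3 on every chosen block. *)

section \<open>Dyadic blocks and lacunary sets\<close>

definition dyadic_block :: "nat \<Rightarrow> nat set" where
  "dyadic_block k = {n. 2 ^ k < 2 * n \<and> n \<le> 2 ^ k}"

definition dyadically_bounded :: "nat set \<Rightarrow> bool" where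
  "dyadically_bounded S \<longleftrightarrow> (\<exists>M. \<forall>k. card (S \<inter> dyadic_block k) \<le> M)"

lemma finite_dyadic_block [simp]: "finite (dyadic_block k)"
  unfolding dyadic_block_def by (rule finite_subset[of _ "{..2 ^ k}"]) auto

lemma dyadic_block_ge_1: "n \<in> dyadic_block k \<Longrightarrow> 1 \<le> n"
  unfolding dyadic_block_def by (cases n) auto

lemma ex_dyadic_block:
  assumes "1 \<le> n"
  shows "\<exists>k. n \<in> dyadic_block k"
proof (cases "n = 1")
  case True
  then show ?thesis by (intro exI[of _ 0]) (simp add: dyadic_block_def)
next
  case False
  then obtain k where "2 ^ k < n" "n \<le> 2 ^ (k + 1)"
    using ex_power_ivl2[of 2 n] assms by auto
  then show ?thesis by (intro exI[of _ "k + 1"]) (simp add: dyadic_block_def)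
qed

lemma card_Int_doubling_interval_le:
  assumes S: "\<forall>k. card (S \<inter> dyadic_block k) \<le> M" and "1 \<le> i"
  shows "card (S \<inter> {i..2 * i}) \<le> 2 * M"
proof -
  obtain k where k: "i \<in> dyadic_block k" using ex_dyadic_block \<open>1 \<le> i\<close> by blast
  have "S \<inter> {i..2 * i} \<subseteq> (S \<inter> dyadic_block k) \<union> (S \<inter> dyadic_block (Suc k))"
    using k unfolding dyadic_block_def by auto
  then have "card (S \<inter> {i..2 * i}) \<le> card ((S \<inter> dyadic_block k) \<union> (S \<inter> dyadic_block (Suc k)))"
    by (intro card_mono) auto
  also have "\<dots> \<le> card (S \<inter> dyadic_block k) + card (S \<inter> dyadic_block (Suc k))"
    by (rule card_Un_le)
  also have "\<dots> \<le> 2 * M" using S[rule_format, of k] S[rule_format, of "Suc k"] by simp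
  finally show ?thesis .
qed

lemma lacunaryI:
  fixes q :: real
  assumes "1 < q" and "\<And>a b. a \<in> A \<Longrightarrow> b \<in> A \<Longrightarrow> a < b \<Longrightarrow> q * a < b"
  shows "lacunary A"
proof (cases "finite A")
  case False
  then have "\<forall>i. q * enumerate A i < enumerate A (Suc i)"
    using assms(2) enumerate_in_set enumerate_step by blast
  then show ?thesis unfolding lacunary_def using assms(1) by blast
qed (simp add: lacunary_def)

lemma card_preimage_dyadic_block_le:
  fixes e :: "nat \<Rightarrow> nat" and q :: real
  assumes "1 < q" and step: "\<And>i. q * e i < e (Suc i)" and L: "2 < q ^ L"
  shows "finite {i. e i \<in> dyadic_block k} \<and> card {i. e i \<in> dyadic_block k} \<le> L"
proof (cases "{i. e i \<in> dyadic_block k} = {}")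
  case False
  define I where "I = {i. e i \<in> dyadic_block k}"
  have growth: "q ^ d * e i \<le> e (i + d)" for i d
  proof (induction d)
    case (Suc d)
    have "q ^ Suc d * e i = q * (q ^ d * e i)" by simp
    also have "\<dots> \<le> q * e (i + d)" using Suc \<open>1 < q\<close> by simp
    also have "\<dots> \<le> e (i + Suc d)" using step[of "i + d"] by simp
    finally show ?case .
  qed simp
  define i0 where "i0 = (LEAST i. i \<in> I)"
  have i0: "i0 \<in> I" using False unfolding i0_def I_def by (auto intro: LeastI)
  have "I \<subseteq> {i0..<i0 + L}"
  proof
    fix i assume i: "i \<in> I"
    have "i0 \<le> i" unfolding i0_def using i by (rule Least_le)
    moreover have "\<not> i0 + L \<le> i"
    proof
      assume "i0 + L \<le> i"
      then have "q ^ L \<le> q ^ (i - i0)" using \<open>1 < q\<close> by (intro power_increasing) auto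
      moreover have "1 \<le> e i0" using i0 dyadic_block_ge_1 unfolding I_def by auto
      ultimately have "2 * e i0 < q ^ (i - i0) * e i0" using L by simp
      also have "\<dots> \<le> e i" using growth[of "i - i0" i0] \<open>i0 \<le> i\<close> by simp
      finally show False using i0 i unfolding I_def dyadic_block_def by simp
    qed
    ultimately show "i \<in> {i0..<i0 + L}" by simp
  qed
  then show ?thesis using finite_subset card_mono[of "{i0..<i0 + L}" I] unfolding I_def by auto
qed simp

lemma lacunary_imp_dyadically_bounded:
  assumes "lacunary A"
  shows "dyadically_bounded A"
proof (cases "finite A")
  case True
  then show ?thesis unfolding dyadically_bounded_def
    by (intro exI[of _ "card A"]) (auto intro: card_mono)
next
  case False
  define e where "e = enumerate A"
  obtain q :: real where q: "1 < q" "\<And>i. q * e i < e (Suc i)"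
    using assms False unfolding lacunary_def e_def by auto
  obtain L where L: "2 < q ^ L" using real_arch_pow[OF q(1)] by blast
  have "card (A \<inter> dyadic_block k) \<le> L" for k
  proof -
    have "range e = A" unfolding e_def using False by (rule range_enumerate)
    then have "A \<inter> dyadic_block k = e ` {i. e i \<in> dyadic_block k}" by auto
    then show ?thesis
      using card_preimage_dyadic_block_le[where e = e and k = k, OF q L] card_image_le[of _ e] by (metis le_trans)
  qed
  then show ?thesis unfolding dyadically_bounded_def by blast
qed

lemma dyadically_bounded_Un:
  assumes "dyadically_bounded A" and "dyadically_bounded B"
  shows "dyadically_bounded (A \<union> B)"
proof -
  obtain a b where a: "\<forall>k. card (A \<inter> dyadic_block k) \<le> a"
    and b: "\<forall>k. card (B \<inter> dyadic_block k) \<le> b"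
    using assms unfolding dyadically_bounded_def by blast
  have "card ((A \<union> B) \<inter> dyadic_block k) \<le> a + b" for k
  proof -
    have "card ((A \<union> B) \<inter> dyadic_block k) \<le> card (A \<inter> dyadic_block k) + card (B \<inter> dyadic_block k)"
      by (simp add: Int_Un_distrib2 card_Un_le)
    then show ?thesis using a b by (meson add_mono order_trans)
  qed
  then show ?thesis unfolding dyadically_bounded_def by blast
qed

lemma dyadically_bounded_Union:
  assumes "finite F" and "\<forall>A\<in>F. dyadically_bounded A"
  shows "dyadically_bounded (\<Union>F)"
  using assms
proof (induction F rule: finite_induct)
  case empty
  show ?case unfolding dyadically_bounded_def by simp
qed (simp add: dyadically_bounded_Un)

lemma double_enumerate_less:
  assumes S: "infinite S" and M: "\<forall>k. card (S \<inter> dyadic_block k) \<le> M"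
  shows "2 * enumerate S j < enumerate S (j + 2 * M + 1)"
proof (rule ccontr)
  define e where "e = enumerate S"
  assume "\<not> ?thesis"
  then have up: "e (j + 2 * M + 1) \<le> 2 * e j" unfolding e_def by simp
  have sm: "strict_mono e" unfolding e_def using S by (rule strict_mono_enumerate)
  have "1 \<le> e j"
    using up strict_mono_less[OF sm, of j "j + 2 * M + 1"] by linarith
  have "e ` {j..j + 2 * M} \<subseteq> S \<inter> {e j..2 * e j}"
  proof
    fix n assume "n \<in> e ` {j..j + 2 * M}"
    then obtain l where "n = e l" "j \<le> l" "l \<le> j + 2 * M" by auto
    moreover have "e l \<le> 2 * e j"
      using \<open>l \<le> j + 2 * M\<close> strict_mono_less_eq[OF sm, of l "j + 2 * M + 1"] up by simp
    ultimately show "n \<in> S \<inter> {e j..2 * e j}"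
      using up strict_mono_less_eq[OF sm] enumerate_in_set[OF S] unfolding e_def by auto
  qed
  then have "card (e ` {j..j + 2 * M}) \<le> card (S \<inter> {e j..2 * e j})" by (intro card_mono) auto
  also have "\<dots> \<le> 2 * M" using card_Int_doubling_interval_le[OF M \<open>1 \<le> e j\<close>] .
  finally show False
    using card_image[OF strict_mono_imp_inj_on[OF sm]] by simp
qed

lemma lacunary_range_stride:
  fixes e :: "nat \<Rightarrow> nat"
  assumes sm: "strict_mono e" and double: "\<And>j. 2 * e j < e (j + P)"
  shows "lacunary (range (\<lambda>i. e (r + P * i)))"
proof (rule lacunaryI[of 2])
  fix a b assume "a \<in> range (\<lambda>i. e (r + P * i))" "b \<in> range (\<lambda>i. e (r + P * i))" "a < b"
  then obtain i i' where a: "a = e (r + P * i)" and b: "b = e (r + P * i')" and "a < b"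
    by blast
  then have "P * i < P * i'" using strict_mono_less[OF sm] by simp
  then have "i < i'" using mult_less_cancel1 by blast
  then have "r + P * i + P \<le> r + P * i'" using mult_le_mono2[of "Suc i" i' P] by simp
  then have "e (r + P * i + P) \<le> b" unfolding b using strict_mono_less_eq[OF sm] by blast
  moreover have "2 * a < e (r + P * i + P)" unfolding a by (rule double)
  ultimately show "2 * real a < real b" by linarith
qed simp

lemma dyadically_bounded_imp_lacunary_cover:
  assumes "dyadically_bounded S"
  shows "\<exists>F. finite F \<and> (\<forall>A\<in>F. lacunary A) \<and> S = \<Union>F"
proof (cases "finite S")
  case True
  then show ?thesis by (intro exI[of _ "{S}"]) (auto simp: lacunary_def)
next
  case False
  obtain M where M: "\<forall>k. card (S \<inter> dyadic_block k) \<le> M"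
    using assms unfolding dyadically_bounded_def by blast
  define e where "e = enumerate S"
  define P where "P = 2 * M + 1"
  have sm: "strict_mono e" unfolding e_def using False by (rule strict_mono_enumerate)
  have "2 * e j < e (j + P)" for j
    using double_enumerate_less[OF False M, of j] unfolding e_def P_def by (simp only: add.assoc)
  then have "lacunary (range (\<lambda>i. e (r + P * i)))" for r by (rule lacunary_range_stride[OF sm])
  moreover have "S = (\<Union>r<P. range (\<lambda>i. e (r + P * i)))"
  proof -
    have "e j \<in> (\<Union>r<P. range (\<lambda>i. e (r + P * i)))" for j
    proof -
      have "e j = e (j mod P + P * (j div P))" by simp
      moreover have "j mod P < P" by (simp add: P_def)
      ultimately show ?thesis by blast
    qed
    then have "range e = (\<Union>r<P. range (\<lambda>i. e (r + P * i)))" by blast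
    then show ?thesis unfolding e_def using False by (simp add: range_enumerate)
  qed
  ultimately show ?thesis
    by (intro exI[of _ "(\<lambda>r. range (\<lambda>i. e (r + P * i))) ` {..<P}"]) auto
qed

lemma dyadically_bounded_iff_lacunary_cover:
  "dyadically_bounded S \<longleftrightarrow> (\<exists>F. finite F \<and> (\<forall>A\<in>F. lacunary A) \<and> S = \<Union>F)"
proof
  assume "\<exists>F. finite F \<and> (\<forall>A\<in>F. lacunary A) \<and> S = \<Union>F"
  then obtain F where "finite F" "\<forall>A\<in>F. lacunary A" "S = \<Union>F" by blast
  then show "dyadically_bounded S" using dyadically_bounded_Union lacunary_imp_dyadically_bounded by simp
qed (rule dyadically_bounded_imp_lacunary_cover)

section \<open>Row and column finite parts of a Hankel pattern\<close>

lemma card_hankel_row_le: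
  assumes "\<forall>k. card (S \<inter> dyadic_block k) \<le> M"
  shows "card {j. j \<le> i \<and> i + j \<in> S} \<le> 2 * M + 1"
proof (cases "i = 0")
  case True
  then have "{j. j \<le> i \<and> i + j \<in> S} \<subseteq> {0}" by auto
  from card_mono[OF _ this] show ?thesis by simp
next
  case False
  have "card {j. j \<le> i \<and> i + j \<in> S} = card ((+) i ` {j. j \<le> i \<and> i + j \<in> S})"
    by (simp add: card_image)
  also have "\<dots> \<le> card (S \<inter> {i..2 * i})" by (rule card_mono) auto
  also have "\<dots> \<le> 2 * M" using card_Int_doubling_interval_le[OF assms] False by simp
  finally show ?thesis by simp
qed

lemma dyadically_bounded_imp_row_column_split:
  assumes "dyadically_bounded S"
  shows "\<exists>R C. hankel_pattern S = R \<union> C \<and> row_finite R \<and> column_finite C"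
proof -
  obtain M where M: "\<forall>k. card (S \<inter> dyadic_block k) \<le> M"
    using assms unfolding dyadically_bounded_def by blast
  define R where "R = {(i, j). i + j \<in> S \<and> j \<le> i}"
  define C where "C = {(i, j). i + j \<in> S \<and> i < j}"
  have "hankel_pattern S = R \<union> C" unfolding hankel_pattern_def R_def C_def by auto
  moreover have "row_finite R" unfolding row_finite_def
  proof (intro exI[of _ "2 * M + 1"] allI conjI)
    fix i
    have "{j. (i, j) \<in> R} = {j. j \<le> i \<and> i + j \<in> S}" unfolding R_def by auto
    then show "finite {j. (i, j) \<in> R}" and "card {j. (i, j) \<in> R} \<le> 2 * M + 1"
      using card_hankel_row_le[OF M, of i] by auto
  qed
  moreover have "column_finite C" unfolding column_finite_def
  proof (intro exI[of _ "2 * M + 1"] allI conjI)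
    fix j
    have sub: "{i. (i, j) \<in> C} \<subseteq> {i. i \<le> j \<and> j + i \<in> S}"
      unfolding C_def by (auto simp: add.commute)
    moreover have "finite {i. i \<le> j \<and> j + i \<in> S}" by (rule finite_subset[of _ "{..j}"]) auto
    ultimately show "finite {i. (i, j) \<in> C}" by (rule finite_subset)
    show "card {i. (i, j) \<in> C} \<le> 2 * M + 1"
      using card_mono[OF \<open>finite {i. i \<le> j \<and> j + i \<in> S}\<close> sub] card_hankel_row_le[OF M, of j]
      by linarith
  qed
  ultimately show ?thesis by blast
qed

lemma card_hankel_pattern:
  assumes "finite D"
  shows "card {(i, j). i + j \<in> D} = (\<Sum>n\<in>D. n + 1)"
proof -
  have "{(i, j). i + j \<in> D} = (\<lambda>(n, i). (i, n - i)) ` Sigma D atMost" (is "?Q = ?img")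
  proof
    show "?Q \<subseteq> ?img"
    proof clarify
      fix i j assume "i + j \<in> D"
      then show "(i, j) \<in> ?img" by (intro image_eqI[of _ _ "(i + j, i)"]) auto
    qed
  qed auto
  moreover have "inj_on (\<lambda>(n, i). (i, n - i)) (Sigma D atMost)"
    by (auto simp: inj_on_def)
  ultimately show ?thesis using assms by (simp add: card_image card_SigmaI)
qed

lemma card_le_row_bound:
  assumes R: "\<And>i. finite {j. (i, j) \<in> R} \<and> card {j. (i, j) \<in> R} \<le> a"
    and Q: "Q \<subseteq> R \<inter> {..m} \<times> UNIV"
  shows "card Q \<le> (m + 1) * a"
proof -
  have "Q \<subseteq> Sigma {..m} (\<lambda>i. {j. (i, j) \<in> R})" using Q by auto
  then have "card Q \<le> card (Sigma {..m} (\<lambda>i. {j. (i, j) \<in> R}))"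
    using R by (intro card_mono) auto
  also have "\<dots> = (\<Sum>i\<le>m. card {j. (i, j) \<in> R})" using R by (simp add: card_SigmaI)
  also have "\<dots> \<le> (\<Sum>i\<le>m. a)" using R by (intro sum_mono) auto
  finally show ?thesis by simp
qed

lemma card_le_column_bound:
  assumes C: "\<And>j. finite {i. (i, j) \<in> C} \<and> card {i. (i, j) \<in> C} \<le> b"
    and Q: "Q \<subseteq> C \<inter> UNIV \<times> {..m}"
  shows "card Q \<le> (m + 1) * b"
proof -
  have "card Q = card (prod.swap ` Q)" by (simp add: card_image)
  also have "\<dots> \<le> (m + 1) * b"
  proof (rule card_le_row_bound)
    have "{i. (j, i) \<in> prod.swap ` C} = {i. (i, j) \<in> C}" for j by force
    then show "finite {i. (j, i) \<in> prod.swap ` C} \<and> card {i. (j, i) \<in> prod.swap ` C} \<le> b" for j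
      using C by simp
    show "prod.swap ` Q \<subseteq> prod.swap ` C \<inter> {..m} \<times> UNIV" using Q by auto
  qed
  finally show ?thesis .
qed

lemma card_dyadic_block_le_row_column_bounds:
  assumes split: "hankel_pattern S = R \<union> C"
    and a: "\<And>i. finite {j. (i, j) \<in> R} \<and> card {j. (i, j) \<in> R} \<le> a"
    and b: "\<And>j. finite {i. (i, j) \<in> C} \<and> card {i. (i, j) \<in> C} \<le> b"
  shows "card (S \<inter> dyadic_block k) \<le> 2 * (a + b)"
proof -
  define D where "D = S \<inter> dyadic_block k"
  define Q where "Q = {(i, j). i + j \<in> D}"
  define m :: nat where "m = 2 ^ k"
  have finD: "finite D" unfolding D_def by simp
  have D: "m < 2 * n \<and> n \<le> m" if "n \<in> D" for n
    using that unfolding D_def dyadic_block_def m_def by auto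
  have "Q \<subseteq> {..m} \<times> {..m}" unfolding Q_def using D by fastforce
  then have "card (Q \<inter> R) \<le> (m + 1) * a" and "card (Q \<inter> C) \<le> (m + 1) * b"
    by (intro card_le_row_bound[OF a] card_le_column_bound[OF b]; auto)+
  moreover have "card Q \<le> card (Q \<inter> R) + card (Q \<inter> C)"
  proof -
    have "Q = (Q \<inter> R) \<union> (Q \<inter> C)"
      using split unfolding Q_def D_def hankel_pattern_def by auto
    then show ?thesis by (metis card_Un_le)
  qed
  moreover have "card D * (m + 1) \<le> 2 * card Q"
  proof -
    have "card D * (m + 1) = (\<Sum>n\<in>D. m + 1)" by simp
    also have "\<dots> \<le> (\<Sum>n\<in>D. 2 * (n + 1))" by (rule sum_mono) (use D in fastforce)
    also have "\<dots> = 2 * card Q"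
      unfolding Q_def card_hankel_pattern[OF finD] by (simp add: sum_distrib_left)
    finally show ?thesis .
  qed
  ultimately have "card D * (m + 1) \<le> 2 * (a + b) * (m + 1)" by (simp add: algebra_simps)
  then show ?thesis unfolding D_def using mult_le_cancel2[of _ "m + 1"] by simp
qed

lemma row_column_split_imp_dyadically_bounded:
  assumes "hankel_pattern S = R \<union> C" and "row_finite R" and "column_finite C"
  shows "dyadically_bounded S"
proof -
  obtain a where "\<And>i. finite {j. (i, j) \<in> R} \<and> card {j. (i, j) \<in> R} \<le> a"
    using \<open>row_finite R\<close> unfolding row_finite_def by blast
  moreover obtain b where "\<And>j. finite {i. (i, j) \<in> C} \<and> card {i. (i, j) \<in> C} \<le> b"
    using \<open>column_finite C\<close> unfolding column_finite_def by blast
  ultimately show ?thesis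
    unfolding dyadically_bounded_def using card_dyadic_block_le_row_column_bounds[OF assms(1)] by blast
qed

lemma row_column_split_iff_dyadically_bounded:
  "(\<exists>R C. hankel_pattern S = R \<union> C \<and> row_finite R \<and> column_finite C) \<longleftrightarrow> dyadically_bounded S"
  using dyadically_bounded_imp_row_column_split row_column_split_imp_dyadically_bounded by blast

section \<open>Schur multipliers with row or column finite support\<close>

lemma matrix_bound_nonneg: "matrix_bound T c \<Longrightarrow> 0 \<le> c"
  unfolding matrix_bound_def by (erule allE[of _ 0]) auto

lemma matrix_bound_transpose:
  assumes "matrix_bound T c"
  shows "matrix_bound (\<lambda>i j. T j i) c"
  unfolding matrix_bound_def
proof (intro allI impI)
  fix n and x y :: "nat \<Rightarrow> complex"
  assume "(\<Sum>j<n. (cmod (x j))\<^sup>2) \<le> 1" and "(\<Sum>i<n. (cmod (y i))\<^sup>2) \<le> 1"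
  then have "cmod (\<Sum>i<n. \<Sum>j<n. x i * T i j * y j) \<le> c"
    using assms unfolding matrix_bound_def by blast
  moreover have "(\<Sum>i<n. \<Sum>j<n. y i * T j i * x j) = (\<Sum>i<n. \<Sum>j<n. x i * T i j * y j)"
    by (subst sum.swap) (simp add: mult_ac)
  ultimately show "cmod (\<Sum>i<n. \<Sum>j<n. y i * T j i * x j) \<le> c" by simp
qed

lemma matrix_bound_add:
  assumes "matrix_bound A a" and "matrix_bound B b"
  shows "matrix_bound (\<lambda>i j. A i j + B i j) (a + b)"
  unfolding matrix_bound_def
proof (intro allI impI)
  fix n and x y :: "nat \<Rightarrow> complex"
  assume "(\<Sum>j<n. (cmod (x j))\<^sup>2) \<le> 1" and "(\<Sum>i<n. (cmod (y i))\<^sup>2) \<le> 1"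
  then have "cmod (\<Sum>i<n. \<Sum>j<n. y i * A i j * x j) \<le> a"
    and "cmod (\<Sum>i<n. \<Sum>j<n. y i * B i j * x j) \<le> b"
    using assms unfolding matrix_bound_def by blast+
  then have "cmod ((\<Sum>i<n. \<Sum>j<n. y i * A i j * x j) + (\<Sum>i<n. \<Sum>j<n. y i * B i j * x j)) \<le> a + b"
    by (rule order_trans[OF norm_triangle_ineq add_mono])
  then show "cmod (\<Sum>i<n. \<Sum>j<n. y i * (A i j + B i j) * x j) \<le> a + b"
    by (simp add: distrib_left distrib_right sum.distrib)
qed

lemma matrix_bound_column_norm:
  assumes T: "matrix_bound T c" and "j < n"
  shows "(\<Sum>i<n. (cmod (T i j))\<^sup>2) \<le> c\<^sup>2"
proof -
  define \<rho> where "\<rho> = sqrt (\<Sum>i<n. (cmod (T i j))\<^sup>2)"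
  have \<rho>_sq: "\<rho>\<^sup>2 = (\<Sum>i<n. (cmod (T i j))\<^sup>2)" unfolding \<rho>_def by (simp add: sum_nonneg)
  have "\<rho> \<le> c"
  proof (cases "\<rho> = 0")
    case True
    then show ?thesis using matrix_bound_nonneg[OF T] by simp
  next
    case False
    define x :: "nat \<Rightarrow> complex" where "x l = (if l = j then 1 else 0)" for l
    define y where "y i = cnj (T i j) / \<rho>" for i
    have "(cmod (x l))\<^sup>2 = (if l = j then 1 else 0)" for l by (simp add: x_def)
    then have "(\<Sum>l<n. (cmod (x l))\<^sup>2) \<le> 1" by simp
    moreover have "(\<Sum>i<n. (cmod (y i))\<^sup>2) \<le> 1"
      using False \<rho>_sq by (simp add: y_def norm_divide power_divide flip: sum_divide_distrib)
    ultimately have "cmod (\<Sum>i<n. \<Sum>l<n. y i * T i l * x l) \<le> c"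
      using T unfolding matrix_bound_def by blast
    moreover have "(\<Sum>l<n. y i * T i l * x l) = y i * T i j" for i
    proof -
      have "(\<Sum>l<n. y i * T i l * x l) = (\<Sum>l<n. if l = j then y i * T i j else 0)"
        by (rule sum.cong) (auto simp: x_def)
      then show ?thesis using \<open>j < n\<close> by simp
    qed
    moreover have "(\<Sum>i<n. y i * T i j) = (\<Sum>i<n. of_real ((cmod (T i j))\<^sup>2)) / of_real \<rho>"
      unfolding y_def complex_norm_square by (simp add: sum_divide_distrib mult.commute)
    moreover have "\<dots> = of_real \<rho>"
      using False by (simp only: flip: of_real_sum \<rho>_sq) (simp add: power2_eq_square)
    ultimately show ?thesis unfolding \<rho>_def by simp
  qed
  then have "\<rho>\<^sup>2 \<le> c\<^sup>2" by (rule power_mono) (simp add: \<rho>_def sum_nonneg)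
  then show ?thesis using \<rho>_sq by simp
qed

lemma sum_row_finite_weights_le:
  fixes P :: "(nat \<times> nat) set" and y :: "nat \<Rightarrow> complex"
  assumes P: "\<And>i. finite {j. (i, j) \<in> P} \<and> card {j. (i, j) \<in> P} \<le> k"
    and y: "(\<Sum>i<n. (cmod (y i))\<^sup>2) \<le> 1"
  shows "(\<Sum>i<n. \<Sum>j<n. if (i, j) \<in> P then (cmod (y i))\<^sup>2 else 0) \<le> k"
proof -
  have "(\<Sum>j<n. if (i, j) \<in> P then (cmod (y i))\<^sup>2 else 0) = (cmod (y i))\<^sup>2 * card {j \<in> {..<n}. (i, j) \<in> P}"
    for i
  proof -
    have "(\<Sum>j<n. if (i, j) \<in> P then (cmod (y i))\<^sup>2 else 0)
        = (\<Sum>j\<in>{j \<in> {..<n}. (i, j) \<in> P}. (cmod (y i))\<^sup>2)"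
      by (rule sum.inter_filter[symmetric]) simp
    then show ?thesis by (simp add: mult.commute)
  qed
  then have "(\<Sum>i<n. \<Sum>j<n. if (i, j) \<in> P then (cmod (y i))\<^sup>2 else 0)
      = (\<Sum>i<n. (cmod (y i))\<^sup>2 * card {j \<in> {..<n}. (i, j) \<in> P})"
    by simp
  also have "\<dots> \<le> (\<Sum>i<n. (cmod (y i))\<^sup>2 * k)"
  proof (intro sum_mono mult_left_mono)
    fix i
    have "card {j \<in> {..<n}. (i, j) \<in> P} \<le> card {j. (i, j) \<in> P}" using P[of i] by (intro card_mono) auto
    then show "real (card {j \<in> {..<n}. (i, j) \<in> P}) \<le> k" using P[of i] by linarith
  qed simp
  also have "\<dots> \<le> k" using y by (simp add: mult_left_le_one_le sum_nonneg flip: sum_distrib_right)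
  finally show ?thesis .
qed

lemma matrix_bound_weighted_sum_sq_le:
  assumes T: "matrix_bound T c" and x: "(\<Sum>j<n. (cmod (x j))\<^sup>2) \<le> 1"
  shows "(\<Sum>i<n. \<Sum>j<n. (cmod (T i j))\<^sup>2 * (cmod (x j))\<^sup>2) \<le> c\<^sup>2"
proof -
  have "(\<Sum>i<n. \<Sum>j<n. (cmod (T i j))\<^sup>2 * (cmod (x j))\<^sup>2)
      = (\<Sum>j<n. (cmod (x j))\<^sup>2 * (\<Sum>i<n. (cmod (T i j))\<^sup>2))"
    by (subst sum.swap) (simp add: sum_distrib_left mult.commute)
  also have "\<dots> \<le> (\<Sum>j<n. (cmod (x j))\<^sup>2 * c\<^sup>2)"
    by (intro sum_mono mult_left_mono matrix_bound_column_norm[OF T]) auto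
  also have "\<dots> \<le> c\<^sup>2" using x by (simp add: mult_left_le_one_le sum_nonneg flip: sum_distrib_right)
  finally show ?thesis .
qed

lemma matrix_bound_schur_row_finite:
  assumes P: "\<And>i. finite {j. (i, j) \<in> P} \<and> card {j. (i, j) \<in> P} \<le> k"
    and s0: "\<And>i j. (i, j) \<notin> P \<Longrightarrow> s i j = 0" and s1: "\<And>i j. cmod (s i j) \<le> 1"
    and T: "matrix_bound T c"
  shows "matrix_bound (\<lambda>i j. s i j * T i j) (sqrt k * c)"
  unfolding matrix_bound_def
proof (intro allI impI)
  fix n and x y :: "nat \<Rightarrow> complex"
  assume x: "(\<Sum>j<n. (cmod (x j))\<^sup>2) \<le> 1" and y: "(\<Sum>i<n. (cmod (y i))\<^sup>2) \<le> 1"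
  define I where "I = {..<n} \<times> {..<n}"
  define a where "a = (\<lambda>(i, j). if (i, j) \<in> P then cmod (y i) else 0)"
  define b where "b = (\<lambda>(i, j). cmod (T i j) * cmod (x j))"
  have "cmod (\<Sum>i<n. \<Sum>j<n. y i * (s i j * T i j) * x j)
      \<le> (\<Sum>i<n. \<Sum>j<n. cmod (y i * (s i j * T i j) * x j))"
    by (rule order_trans[OF norm_sum sum_mono]) (rule norm_sum)
  also have "\<dots> \<le> (\<Sum>i<n. \<Sum>j<n. \<bar>a (i, j)\<bar> * \<bar>b (i, j)\<bar>)"
  proof (intro sum_mono)
    fix i j
    show "cmod (y i * (s i j * T i j) * x j) \<le> \<bar>a (i, j)\<bar> * \<bar>b (i, j)\<bar>"
    proof (cases "(i, j) \<in> P")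
      case True
      have "cmod (y i * (s i j * T i j) * x j) = cmod (y i) * cmod (s i j) * (cmod (T i j) * cmod (x j))"
        by (simp add: norm_mult)
      also have "\<dots> \<le> cmod (y i) * 1 * (cmod (T i j) * cmod (x j))"
        using s1[of i j] by (intro mult_right_mono mult_left_mono) auto
      finally show ?thesis using True by (simp add: a_def b_def)
    qed (simp add: s0)
  qed
  also have "\<dots> = (\<Sum>p\<in>I. \<bar>a p\<bar> * \<bar>b p\<bar>)" unfolding I_def by (simp add: sum.cartesian_product')
  also have "\<dots> \<le> L2_set a I * L2_set b I" by (rule L2_set_mult_ineq)
  also have "\<dots> \<le> sqrt k * c"
  proof (rule mult_mono)
    have "(\<Sum>p\<in>I. (a p)\<^sup>2) = (\<Sum>i<n. \<Sum>j<n. if (i, j) \<in> P then (cmod (y i))\<^sup>2 else 0)"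
      unfolding I_def a_def sum.cartesian_product' by (intro sum.cong refl) auto
    with sum_row_finite_weights_le[OF P y] show "L2_set a I \<le> sqrt k"
      unfolding L2_set_def by simp
    have "(\<Sum>p\<in>I. (b p)\<^sup>2) = (\<Sum>i<n. \<Sum>j<n. (cmod (T i j))\<^sup>2 * (cmod (x j))\<^sup>2)"
      unfolding I_def b_def by (simp add: sum.cartesian_product' power_mult_distrib)
    with matrix_bound_weighted_sum_sq_le[OF T x] show "L2_set b I \<le> c"
      unfolding L2_set_def using matrix_bound_nonneg[OF T] real_sqrt_le_mono by fastforce
  qed simp_all
  finally show "cmod (\<Sum>i<n. \<Sum>j<n. y i * (s i j * T i j) * x j) \<le> sqrt k * c" .
qed

lemma matrix_bound_schur_column_finite:
  assumes P: "\<And>j. finite {i. (i, j) \<in> P} \<and> card {i. (i, j) \<in> P} \<le> k"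
    and s0: "\<And>i j. (i, j) \<notin> P \<Longrightarrow> s i j = 0" and s1: "\<And>i j. cmod (s i j) \<le> 1"
    and T: "matrix_bound T c"
  shows "matrix_bound (\<lambda>i j. s i j * T i j) (sqrt k * c)"
proof -
  have "{j. (i, j) \<in> prod.swap ` P} = {j. (j, i) \<in> P}" for i by force
  then have "matrix_bound (\<lambda>i j. s j i * T j i) (sqrt k * c)"
    using P s0 s1 matrix_bound_transpose[OF T]
    by (intro matrix_bound_schur_row_finite[where P = "prod.swap ` P"]) auto
  from matrix_bound_transpose[OF this] show ?thesis by simp
qed

lemma schur_bounded_row_column_finite_Un:
  assumes "row_finite R" and "column_finite C"
  shows "schur_bounded (R \<union> C)"
  unfolding schur_bounded_def bounded_schur_multiplier_def
proof (intro allI impI)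
  fix s :: "nat \<Rightarrow> nat \<Rightarrow> complex"
  assume s0: "\<forall>i j. (i, j) \<notin> R \<union> C \<longrightarrow> s i j = 0" and s1: "\<forall>i j. cmod (s i j) \<le> 1"
  obtain a where a: "\<And>i. finite {j. (i, j) \<in> R} \<and> card {j. (i, j) \<in> R} \<le> a"
    using \<open>row_finite R\<close> unfolding row_finite_def by blast
  obtain b where b: "\<And>j. finite {i. (i, j) \<in> C} \<and> card {i. (i, j) \<in> C} \<le> b"
    using \<open>column_finite C\<close> unfolding column_finite_def by blast
  define sR where "sR i j = (if (i, j) \<in> R then s i j else 0)" for i j
  define sC where "sC i j = (if (i, j) \<in> R then 0 else s i j)" for i j
  show "\<exists>K. \<forall>T c. matrix_bound T c \<longrightarrow> matrix_bound (\<lambda>i j. s i j * T i j) (K * c)"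
  proof (intro exI allI impI)
    fix T c assume T: "matrix_bound T c"
    have "matrix_bound (\<lambda>i j. sR i j * T i j) (sqrt a * c)"
      by (rule matrix_bound_schur_row_finite[OF a _ _ T]) (use s1 in \<open>auto simp: sR_def\<close>)
    moreover have "matrix_bound (\<lambda>i j. sC i j * T i j) (sqrt b * c)"
      by (rule matrix_bound_schur_column_finite[OF b _ _ T]) (use s0 s1 in \<open>auto simp: sC_def\<close>)
    ultimately have "matrix_bound (\<lambda>i j. sR i j * T i j + sC i j * T i j) (sqrt a * c + sqrt b * c)"
      by (rule matrix_bound_add)
    moreover have "(\<lambda>i j. sR i j * T i j + sC i j * T i j) = (\<lambda>i j. s i j * T i j)"
      by (simp add: sR_def sC_def fun_eq_iff)
    ultimately show "matrix_bound (\<lambda>i j. s i j * T i j) ((sqrt a + sqrt b) * c)"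
      by (simp add: distrib_right)
  qed
qed

section \<open>Fourier test matrices\<close>

lemma sum_sum_if_restrict:
  assumes "finite A" and "finite B"
  shows "(\<Sum>i\<in>A. \<Sum>j\<in>B. if i \<in> I \<and> j \<in> J then g i j else 0)
       = (\<Sum>i\<in>A \<inter> I. \<Sum>j\<in>B \<inter> J. g i j)"
proof -
  have "(\<Sum>i\<in>A. \<Sum>j\<in>B. if i \<in> I \<and> j \<in> J then g i j else 0)
      = (\<Sum>i\<in>A. if i \<in> I then (\<Sum>j\<in>B. if j \<in> J then g i j else 0) else 0)"
    by (rule sum.cong) auto
  then show ?thesis using assms by (simp add: sum.inter_restrict)
qed

definition fourier_char :: "nat \<Rightarrow> nat \<Rightarrow> nat \<Rightarrow> complex" where
  "fourier_char M t n = cis (2 * pi * real t * real n / real M)"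

lemma fourier_char_add: "fourier_char M t a * fourier_char M t b = fourier_char M t (a + b)"
  unfolding fourier_char_def by (simp add: cis_mult add_divide_distrib distrib_left)

lemma norm_fourier_char [simp]: "cmod (fourier_char M t n) = 1"
  unfolding fourier_char_def by simp

lemma fourier_char_orthogonal:
  assumes "0 < M" and "\<bar>real i - real i'\<bar> < real M"
  shows "(\<Sum>t<M. fourier_char M t i * cnj (fourier_char M t i')) = (if i = i' then of_nat M else 0)"
proof (cases "i = i'")
  case True
  then show ?thesis by (simp add: fourier_char_def cis_cnj cis_mult)
next
  case False
  define d :: real where "d = real i - real i'"
  define w where "w = cis (2 * pi * d / real M)"
  have "fourier_char M t i * cnj (fourier_char M t i') = w ^ t" for t
  proof -
    have "fourier_char M t i * cnj (fourier_char M t i') = cis (real t * (2 * pi * d / real M))"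
      unfolding fourier_char_def cis_cnj cis_mult d_def using \<open>0 < M\<close> by (simp add: field_simps)
    then show ?thesis unfolding w_def Complex.DeMoivre .
  qed
  moreover have "w \<noteq> 1"
  proof
    assume "w = 1"
    then have "Re w = 1" by simp
    then have "cos (2 * pi * d / real M) = 1" unfolding w_def by simp
    then obtain k :: int where "2 * pi * d / real M = of_int k * 2 * pi" using cos_one_2pi_int by blast
    then have "d = of_int k * real M" using \<open>0 < M\<close> by (simp add: field_simps)
    moreover have "d \<noteq> 0" using False unfolding d_def by simp
    ultimately have "real M \<le> \<bar>d\<bar>" by (auto simp: abs_mult)
    then show False using assms(2) unfolding d_def by simp
  qed
  moreover have "w ^ M = 1"
  proof -
    have "w ^ M = cis (2 * pi * of_int (int i - int i'))"
      unfolding w_def Complex.DeMoivre using \<open>0 < M\<close> by (simp add: d_def)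
    also have "\<dots> = 1" by (rule cis_multiple_2pi) simp
    finally show ?thesis .
  qed
  ultimately show ?thesis using False geometric_sum[of w M] by simp
qed

lemma parseval_fourier_char:
  assumes "0 < M" and "finite I" and "I \<subseteq> {a..<a + M}"
  shows "(\<Sum>t<M. (cmod (\<Sum>i\<in>I. y i * fourier_char M t i))\<^sup>2) = real M * (\<Sum>i\<in>I. (cmod (y i))\<^sup>2)"
proof -
  let ?\<chi> = "fourier_char M"
  have orth: "(\<Sum>t<M. ?\<chi> t i * cnj (?\<chi> t i')) = (if i = i' then of_nat M else 0)"
    if "i \<in> I" "i' \<in> I" for i i'
  proof (rule fourier_char_orthogonal)
    have "a \<le> i" "i < a + M" "a \<le> i'" "i' < a + M" using that assms(3) by auto
    then show "\<bar>real i - real i'\<bar> < real M" by linarith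
  qed (use assms in simp)
  have "complex_of_real (\<Sum>t<M. (cmod (\<Sum>i\<in>I. y i * ?\<chi> t i))\<^sup>2)
      = (\<Sum>t<M. (\<Sum>i\<in>I. y i * ?\<chi> t i) * cnj (\<Sum>i'\<in>I. y i' * ?\<chi> t i'))"
    by (simp only: of_real_sum complex_norm_square)
  also have "\<dots> = (\<Sum>t<M. \<Sum>i'\<in>I. \<Sum>i\<in>I. y i * cnj (y i') * (?\<chi> t i * cnj (?\<chi> t i')))"
    by (simp add: sum_distrib_left sum_distrib_right mult_ac)
  also have "\<dots> = (\<Sum>i'\<in>I. \<Sum>i\<in>I. \<Sum>t<M. y i * cnj (y i') * (?\<chi> t i * cnj (?\<chi> t i')))"
    by (subst sum.swap) (rule sum.cong[OF refl sum.swap])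
  also have "\<dots> = (\<Sum>i'\<in>I. \<Sum>i\<in>I. if i = i' then of_real (real M * (cmod (y i))\<^sup>2) else 0)"
    by (intro sum.cong refl)
      (simp add: orth mult.commute flip: sum_distrib_left complex_norm_square)
  also have "\<dots> = (\<Sum>i'\<in>I. of_real (real M * (cmod (y i'))\<^sup>2))"
    using \<open>finite I\<close> by (simp add: sum.delta')
  also have "\<dots> = of_real (real M * (\<Sum>i\<in>I. (cmod (y i))\<^sup>2))"
    by (simp only: of_real_sum sum_distrib_left)
  finally show ?thesis by (simp only: of_real_eq_iff)
qed

lemma L2_set_fourier_char_le:
  assumes "0 < M" and "finite I" and "I \<subseteq> {a..<a + M}" and "(\<Sum>i\<in>I. (cmod (y i))\<^sup>2) \<le> 1"
  shows "L2_set (\<lambda>t. cmod (\<Sum>i\<in>I. y i * fourier_char M t i)) {..<M} \<le> sqrt M"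
  using parseval_fourier_char[OF assms(1-3), of y] assms(4)
  unfolding L2_set_def by (simp add: mult_left_le)

lemma fourier_test_matrix_bound:
  assumes "0 < M" and "finite I" "I \<subseteq> {a..<a + M}" and "finite J" "J \<subseteq> {b..<b + M}"
    and c: "\<And>t. cmod (c t) \<le> 1 / real M"
  shows "matrix_bound (\<lambda>i j. if i \<in> I \<and> j \<in> J
            then \<Sum>t<M. c t * fourier_char M t i * fourier_char M t j else 0) 1"
  unfolding matrix_bound_def
proof (intro allI impI)
  let ?\<chi> = "fourier_char M"
  fix n and x y :: "nat \<Rightarrow> complex"
  assume x: "(\<Sum>j<n. (cmod (x j))\<^sup>2) \<le> 1" and y: "(\<Sum>i<n. (cmod (y i))\<^sup>2) \<le> 1"
  define I' where "I' = {..<n} \<inter> I"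
  define J' where "J' = {..<n} \<inter> J"
  define Y where "Y t = (\<Sum>i\<in>I'. y i * ?\<chi> t i)" for t
  define X where "X t = (\<Sum>j\<in>J'. x j * ?\<chi> t j)" for t
  have "(\<Sum>i\<in>I'. (cmod (y i))\<^sup>2) \<le> (\<Sum>i<n. (cmod (y i))\<^sup>2)"
    and "(\<Sum>j\<in>J'. (cmod (x j))\<^sup>2) \<le> (\<Sum>j<n. (cmod (x j))\<^sup>2)"
    unfolding I'_def J'_def by (intro sum_mono2; simp)+
  with x y have "(\<Sum>i\<in>I'. (cmod (y i))\<^sup>2) \<le> 1" "(\<Sum>j\<in>J'. (cmod (x j))\<^sup>2) \<le> 1"
    by linarith+
  then have "L2_set (\<lambda>t. cmod (Y t)) {..<M} \<le> sqrt M" and "L2_set (\<lambda>t. cmod (X t)) {..<M} \<le> sqrt M"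
    unfolding Y_def X_def using assms
    by (intro L2_set_fourier_char_le[where a = a] L2_set_fourier_char_le[where a = b]; auto simp: I'_def J'_def)+
  then have L2: "L2_set (\<lambda>t. cmod (Y t)) {..<M} * L2_set (\<lambda>t. cmod (X t)) {..<M} \<le> sqrt M * sqrt M"
    by (intro mult_mono) auto
  have "(\<Sum>i<n. \<Sum>j<n. y i * (if i \<in> I \<and> j \<in> J
            then \<Sum>t<M. c t * ?\<chi> t i * ?\<chi> t j else 0) * x j)
      = (\<Sum>i<n. \<Sum>j<n. if i \<in> I \<and> j \<in> J
            then y i * (\<Sum>t<M. c t * ?\<chi> t i * ?\<chi> t j) * x j else 0)"
    by (intro sum.cong refl) simp
  also have "\<dots> = (\<Sum>i\<in>I'. \<Sum>j\<in>J'. y i * (\<Sum>t<M. c t * ?\<chi> t i * ?\<chi> t j) * x j)"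
    unfolding I'_def J'_def by (rule sum_sum_if_restrict) simp_all
  also have "\<dots> = (\<Sum>i\<in>I'. \<Sum>j\<in>J'. \<Sum>t<M. c t * (y i * ?\<chi> t i) * (x j * ?\<chi> t j))"
    by (simp add: sum_distrib_left sum_distrib_right mult_ac)
  also have "\<dots> = (\<Sum>i\<in>I'. \<Sum>t<M. \<Sum>j\<in>J'. c t * (y i * ?\<chi> t i) * (x j * ?\<chi> t j))"
    by (rule sum.cong[OF refl]) (rule sum.swap)
  also have "\<dots> = (\<Sum>t<M. \<Sum>i\<in>I'. \<Sum>j\<in>J'. c t * (y i * ?\<chi> t i) * (x j * ?\<chi> t j))"
    by (rule sum.swap)
  also have "\<dots> = (\<Sum>t<M. c t * Y t * X t)"
    unfolding X_def Y_def by (simp add: sum_distrib_left sum_distrib_right mult_ac)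
  finally have form: "(\<Sum>i<n. \<Sum>j<n. y i * (if i \<in> I \<and> j \<in> J
            then \<Sum>t<M. c t * ?\<chi> t i * ?\<chi> t j else 0) * x j) = (\<Sum>t<M. c t * Y t * X t)" .
  have "cmod (\<Sum>t<M. c t * Y t * X t) \<le> (\<Sum>t<M. 1 / real M * (cmod (Y t) * cmod (X t)))"
  proof (rule order_trans[OF norm_sum sum_mono])
    show "cmod (c t * Y t * X t) \<le> 1 / real M * (cmod (Y t) * cmod (X t))" for t
      unfolding norm_mult mult.assoc by (rule mult_right_mono[OF c]) simp
  qed
  also have "\<dots> \<le> 1 / real M * (L2_set (\<lambda>t. cmod (Y t)) {..<M} * L2_set (\<lambda>t. cmod (X t)) {..<M})"
    using L2_set_mult_ineq[where f = "\<lambda>t. cmod (Y t)" and g = "\<lambda>t. cmod (X t)" and A = "{..<M}"]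
    unfolding sum_distrib_left[symmetric] by (intro mult_left_mono) simp_all
  also have "\<dots> \<le> 1 / real M * (sqrt M * sqrt M)"
    using L2 by (intro mult_left_mono) auto
  also have "\<dots> = 1" using \<open>0 < M\<close> by simp
  finally show "cmod (\<Sum>i<n. \<Sum>j<n. y i * (if i \<in> I \<and> j \<in> J
            then \<Sum>t<M. c t * ?\<chi> t i * ?\<chi> t j else 0) * x j) \<le> 1"
    unfolding form .
qed

section \<open>Khintchine's inequality\<close>

(* Summing over A \<in> Pow D averages over all 2 ^ card D choices of signs. *)
definition signed_sum :: "'a set \<Rightarrow> 'a set \<Rightarrow> ('a \<Rightarrow> complex) \<Rightarrow> complex" where
  "signed_sum D A b = (\<Sum>n\<in>D. if n \<in> A then b n else - b n)"

lemma sum_Pow_insert: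
  assumes "finite F" and "x \<notin> F"
  shows "(\<Sum>A\<in>Pow (insert x F). g A) = (\<Sum>A\<in>Pow F. g A + g (insert x A))"
proof -
  have "(\<Sum>A\<in>Pow (insert x F). g A) = (\<Sum>A\<in>Pow F. g A) + (\<Sum>A\<in>insert x ` Pow F. g A)"
    unfolding Pow_insert by (rule sum.union_disjoint) (use assms in auto)
  also have "(\<Sum>A\<in>insert x ` Pow F. g A) = (\<Sum>A\<in>Pow F. g (insert x A))"
    by (subst sum.reindex) (use assms in \<open>auto intro!: inj_onI simp: o_def\<close>)
  finally show ?thesis by (simp add: sum.distrib)
qed

lemma signed_sum_insert:
  assumes "finite F" and "x \<notin> F" and "A \<subseteq> F"
  shows "signed_sum (insert x F) A b = signed_sum F A b - b x"
    and "signed_sum (insert x F) (insert x A) b = signed_sum F A b + b x"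
proof -
  show "signed_sum (insert x F) A b = signed_sum F A b - b x"
    using assms unfolding signed_sum_def by auto
  have "(\<Sum>n\<in>F. if n \<in> insert x A then b n else - b n) = (\<Sum>n\<in>F. if n \<in> A then b n else - b n)"
    using \<open>x \<notin> F\<close> by (intro sum.cong) auto
  then show "signed_sum (insert x F) (insert x A) b = signed_sum F A b + b x"
    using assms unfolding signed_sum_def by simp
qed

lemma norm_diff_add_sq: "(cmod (z - w))\<^sup>2 + (cmod (z + w))\<^sup>2 = 2 * (cmod z)\<^sup>2 + 2 * (cmod w)\<^sup>2"
  unfolding cmod_power2 by (simp add: power2_eq_square algebra_simps)

lemma norm_diff_add_pow4_le:
  "(cmod (z - w)) ^ 4 + (cmod (z + w)) ^ 4 \<le> 2 * (cmod z) ^ 4 + 12 * (cmod z)\<^sup>2 * (cmod w)\<^sup>2 + 2 * (cmod w) ^ 4"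
proof -
  define A where "A = (cmod z)\<^sup>2"
  define B where "B = (cmod w)\<^sup>2"
  define r where "r = Re z * Re w + Im z * Im w"
  have pow4: "x ^ 4 = (x\<^sup>2)\<^sup>2" for x :: real by (simp flip: power_mult)
  have minus: "(cmod (z - w))\<^sup>2 = A + B - 2 * r" and plus: "(cmod (z + w))\<^sup>2 = A + B + 2 * r"
    unfolding A_def B_def r_def cmod_power2 by (simp_all add: power2_eq_square algebra_simps)
  have "(cmod (z - w)) ^ 4 + (cmod (z + w)) ^ 4 = 2 * (A + B)\<^sup>2 + 8 * r\<^sup>2"
    unfolding pow4 minus plus by (simp add: power2_eq_square algebra_simps)
  moreover have "A * B - r\<^sup>2 = (Re z * Im w - Im z * Re w)\<^sup>2"
    unfolding A_def B_def r_def cmod_power2 by (simp add: power2_eq_square algebra_simps)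
  then have "r\<^sup>2 \<le> A * B" by (metis diff_ge_0_iff_ge zero_le_power2)
  ultimately show ?thesis unfolding pow4 A_def[symmetric] B_def[symmetric]
    by (simp add: power2_eq_square algebra_simps)
qed

lemma sum_Pow_signed_sum_sq:
  assumes "finite D"
  shows "(\<Sum>A\<in>Pow D. (cmod (signed_sum D A b))\<^sup>2) = 2 ^ card D * (\<Sum>n\<in>D. (cmod (b n))\<^sup>2)"
  using assms
proof (induction D rule: finite_induct)
  case (insert x F)
  have "(\<Sum>A\<in>Pow (insert x F). (cmod (signed_sum (insert x F) A b))\<^sup>2)
      = (\<Sum>A\<in>Pow F. 2 * (cmod (signed_sum F A b))\<^sup>2 + 2 * (cmod (b x))\<^sup>2)"
    unfolding sum_Pow_insert[OF insert(1,2)]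
    by (intro sum.cong refl) (simp add: signed_sum_insert[OF insert(1,2)] norm_diff_add_sq)
  also have "\<dots> = 2 ^ card (insert x F) * (\<Sum>n\<in>insert x F. (cmod (b n))\<^sup>2)"
    using insert by (simp add: sum.distrib card_Pow algebra_simps flip: sum_distrib_left)
  finally show ?case .
qed (simp add: signed_sum_def)

lemma sum_Pow_signed_sum_pow4_le:
  assumes "finite D"
  shows "(\<Sum>A\<in>Pow D. (cmod (signed_sum D A b)) ^ 4) \<le> 3 * 2 ^ card D * (\<Sum>n\<in>D. (cmod (b n))\<^sup>2)\<^sup>2"
  using assms
proof (induction D rule: finite_induct)
  case (insert x F)
  define \<alpha> where "\<alpha> = (\<Sum>n\<in>F. (cmod (b n))\<^sup>2)"
  define \<beta> where "\<beta> = (cmod (b x))\<^sup>2"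
  define m :: real where "m = 2 ^ card F"
  have "(\<Sum>A\<in>Pow (insert x F). (cmod (signed_sum (insert x F) A b)) ^ 4)
      \<le> (\<Sum>A\<in>Pow F. 2 * (cmod (signed_sum F A b)) ^ 4 + 12 * \<beta> * (cmod (signed_sum F A b))\<^sup>2 + 2 * \<beta>\<^sup>2)"
    unfolding sum_Pow_insert[OF insert(1,2)]
  proof (rule sum_mono)
    fix A assume "A \<in> Pow F"
    then show "(cmod (signed_sum (insert x F) A b)) ^ 4 + (cmod (signed_sum (insert x F) (insert x A) b)) ^ 4
        \<le> 2 * (cmod (signed_sum F A b)) ^ 4 + 12 * \<beta> * (cmod (signed_sum F A b))\<^sup>2 + 2 * \<beta>\<^sup>2"
      using norm_diff_add_pow4_le[of "signed_sum F A b" "b x"]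
      by (simp add: signed_sum_insert[OF insert(1,2)] \<beta>_def mult_ac flip: power_mult)
  qed
  also have "\<dots> = 2 * (\<Sum>A\<in>Pow F. (cmod (signed_sum F A b)) ^ 4)
      + 12 * \<beta> * (\<Sum>A\<in>Pow F. (cmod (signed_sum F A b))\<^sup>2) + 2 * m * \<beta>\<^sup>2"
    using insert(1) by (simp add: sum.distrib card_Pow m_def flip: sum_distrib_left)
  also have "\<dots> \<le> 2 * (3 * m * \<alpha>\<^sup>2) + 12 * \<beta> * (m * \<alpha>) + 2 * m * \<beta>\<^sup>2"
    using insert(3) sum_Pow_signed_sum_sq[OF insert(1)] \<beta>_def
    unfolding m_def \<alpha>_def by simp
  also have "\<dots> \<le> 3 * (2 * m) * (\<alpha> + \<beta>)\<^sup>2"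
    by (simp add: power2_eq_square algebra_simps m_def \<beta>_def)
  also have "\<dots> = 3 * 2 ^ card (insert x F) * (\<Sum>n\<in>insert x F. (cmod (b n))\<^sup>2)\<^sup>2"
    using insert(1,2) by (simp add: m_def \<alpha>_def \<beta>_def add.commute)
  finally show ?case .
qed (simp add: signed_sum_def)

lemma sum_power2_cube_le:
  fixes u :: "'a \<Rightarrow> real"
  assumes u: "\<And>x. 0 \<le> u x"
  shows "(\<Sum>x\<in>X. (u x)\<^sup>2) ^ 3 \<le> (\<Sum>x\<in>X. u x)\<^sup>2 * (\<Sum>x\<in>X. (u x) ^ 4)"
proof -
  define S1 where "S1 = (\<Sum>x\<in>X. u x)"
  define S2 where "S2 = (\<Sum>x\<in>X. (u x)\<^sup>2)"
  define S3 where "S3 = (\<Sum>x\<in>X. (u x) ^ 3)"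
  define S4 where "S4 = (\<Sum>x\<in>X. (u x) ^ 4)"
  have CS1: "S2\<^sup>2 \<le> S1 * S3"
  proof -
    have "(\<Sum>x\<in>X. sqrt (u x) * (u x * sqrt (u x)))\<^sup>2
        \<le> (\<Sum>x\<in>X. (sqrt (u x))\<^sup>2) * (\<Sum>x\<in>X. (u x * sqrt (u x))\<^sup>2)"
      by (rule Cauchy_Schwarz_ineq_sum)
    moreover have "sqrt (u x) * (u x * sqrt (u x)) = (u x)\<^sup>2" for x
      using u[of x] by (simp add: power2_eq_square mult_ac)
    moreover have "(sqrt (u x))\<^sup>2 = u x" for x using u[of x] by simp
    moreover have "(u x * sqrt (u x))\<^sup>2 = (u x) ^ 3" for x
      using u[of x] by (simp add: power_mult_distrib power2_eq_square power3_eq_cube)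
    ultimately show ?thesis unfolding S1_def S2_def S3_def by simp
  qed
  have CS2: "S3\<^sup>2 \<le> S2 * S4"
  proof -
    have "(\<Sum>x\<in>X. u x * (u x)\<^sup>2)\<^sup>2 \<le> (\<Sum>x\<in>X. (u x)\<^sup>2) * (\<Sum>x\<in>X. ((u x)\<^sup>2)\<^sup>2)"
      by (rule Cauchy_Schwarz_ineq_sum)
    moreover have "u x * (u x)\<^sup>2 = (u x) ^ 3" for x by (simp add: power2_eq_square power3_eq_cube)
    moreover have "((u x)\<^sup>2)\<^sup>2 = (u x) ^ 4" for x by (simp flip: power_mult)
    ultimately show ?thesis unfolding S2_def S3_def S4_def by simp
  qed
  have "(S2\<^sup>2)\<^sup>2 \<le> (S1 * S3)\<^sup>2" by (rule power_mono[OF CS1]) simp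
  also have "\<dots> = S1\<^sup>2 * S3\<^sup>2" by (simp add: power_mult_distrib)
  also have "\<dots> \<le> S1\<^sup>2 * (S2 * S4)" using CS2 by (rule mult_left_mono) simp
  finally have "S2 * S2 ^ 3 \<le> S2 * (S1\<^sup>2 * S4)"
    by (simp add: power2_eq_square power3_eq_cube mult_ac)
  moreover have "0 \<le> S2" "0 \<le> S4" unfolding S2_def S4_def by (simp_all add: sum_nonneg u)
  ultimately have "S2 ^ 3 \<le> S1\<^sup>2 * S4"
    by (cases "S2 = 0") (simp_all add: mult_le_cancel_left_pos)
  then show ?thesis unfolding S1_def S2_def S4_def .
qed

lemma khintchine_L1:
  assumes "finite D"
  shows "2 ^ card D * sqrt ((\<Sum>n\<in>D. (cmod (b n))\<^sup>2) / 3) \<le> (\<Sum>A\<in>Pow D. cmod (signed_sum D A b))"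
proof -
  define m :: real where "m = 2 ^ card D"
  define \<beta> where "\<beta> = (\<Sum>n\<in>D. (cmod (b n))\<^sup>2)"
  define S1 where "S1 = (\<Sum>A\<in>Pow D. cmod (signed_sum D A b))"
  have "0 < m" "0 \<le> S1" by (simp_all add: m_def S1_def sum_nonneg)
  show ?thesis
  proof (cases "\<beta> = 0")
    case False
    then have "0 < \<beta>" unfolding \<beta>_def by (simp add: sum_nonneg order_less_le)
    have "(m * \<beta>) ^ 3 \<le> S1\<^sup>2 * (\<Sum>A\<in>Pow D. (cmod (signed_sum D A b)) ^ 4)"
      using sum_power2_cube_le[of "\<lambda>A. cmod (signed_sum D A b)" "Pow D"]
      unfolding sum_Pow_signed_sum_sq[OF assms] by (simp add: m_def \<beta>_def S1_def)
    also have "\<dots> \<le> S1\<^sup>2 * (3 * m * \<beta>\<^sup>2)"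
      using sum_Pow_signed_sum_pow4_le[OF assms] by (intro mult_left_mono) (simp_all add: m_def \<beta>_def)
    finally have "(m * sqrt (\<beta> / 3))\<^sup>2 * (3 * m * \<beta>\<^sup>2) \<le> S1\<^sup>2 * (3 * m * \<beta>\<^sup>2)"
      using \<open>0 < \<beta>\<close> by (simp add: power_mult_distrib power2_eq_square power3_eq_cube mult_ac)
    then have "(m * sqrt (\<beta> / 3))\<^sup>2 \<le> S1\<^sup>2"
      using \<open>0 < m\<close> \<open>0 < \<beta>\<close> by (simp add: mult_le_cancel_right_pos)
    then show ?thesis
      using \<open>0 \<le> S1\<close> power2_le_imp_le unfolding m_def \<beta>_def S1_def by blast
  qed (simp add: \<beta>_def sum_nonneg)
qed

lemma ex_signed_sums_large:
  assumes "finite D" and "finite T"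
  shows "\<exists>A\<subseteq>D. (\<Sum>t\<in>T. sqrt ((\<Sum>n\<in>D. (cmod (b t n))\<^sup>2) / 3))
                \<le> (\<Sum>t\<in>T. cmod (signed_sum D A (b t)))"
proof (rule ccontr)
  define R where "R = (\<Sum>t\<in>T. sqrt ((\<Sum>n\<in>D. (cmod (b t n))\<^sup>2) / 3))"
  assume "\<not> ?thesis"
  then have "\<And>A. A \<in> Pow D \<Longrightarrow> (\<Sum>t\<in>T. cmod (signed_sum D A (b t))) < R"
    unfolding R_def by auto
  then have "(\<Sum>A\<in>Pow D. \<Sum>t\<in>T. cmod (signed_sum D A (b t))) < of_nat (card (Pow D)) * R"
    using assms(1) by (intro sum_bounded_above_strict) (auto simp: card_Pow)
  also have "\<dots> = (\<Sum>t\<in>T. 2 ^ card D * sqrt ((\<Sum>n\<in>D. (cmod (b t n))\<^sup>2) / 3))"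
    using assms(1) by (simp add: R_def card_Pow sum_distrib_left)
  also have "\<dots> \<le> (\<Sum>t\<in>T. \<Sum>A\<in>Pow D. cmod (signed_sum D A (b t)))"
    by (intro sum_mono khintchine_L1[OF assms(1)])
  also have "\<dots> = (\<Sum>A\<in>Pow D. \<Sum>t\<in>T. cmod (signed_sum D A (b t)))"
    by (rule sum.swap)
  finally show False by simp
qed

section \<open>Hankel multipliers with random signs\<close>

lemma sum_hankel_window:
  fixes h :: "nat \<Rightarrow> 'a::semiring_1"
  assumes D: "D \<subseteq> {2 * q<..4 * q}"
    and h0: "\<And>n. q < n \<Longrightarrow> n < 5 * q \<Longrightarrow> n \<notin> D \<Longrightarrow> h n = 0"
  shows "(\<Sum>i<q. \<Sum>j\<in>{q<..4 * q}. h (i + j)) = of_nat q * (\<Sum>n\<in>D. h n)"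
proof -
  have "(\<Sum>j\<in>{q<..4 * q}. h (i + j)) = (\<Sum>n\<in>D. h n)" if "i < q" for i
  proof -
    have "inj_on ((+) i) {q<..4 * q}" by simp
    from sum.reindex[OF this, of h] have "(\<Sum>j\<in>{q<..4 * q}. h (i + j)) = (\<Sum>n\<in>(+) i ` {q<..4 * q}. h n)"
      by (simp only: comp_def)
    also have "\<dots> = (\<Sum>n\<in>D. h n)"
    proof (rule sum.mono_neutral_right)
      show "D \<subseteq> (+) i ` {q<..4 * q}"
      proof
        fix n assume "n \<in> D"
        then have "2 * q < n" "n \<le> 4 * q" using D by auto
        then have "n - i \<in> {q<..4 * q}" and "n = i + (n - i)" using \<open>i < q\<close> by auto
        then show "n \<in> (+) i ` {q<..4 * q}" by blast
      qed
      show "\<forall>n\<in>(+) i ` {q<..4 * q} - D. h n = 0" using h0 \<open>i < q\<close> by auto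
    qed simp
    finally show ?thesis .
  qed
  then show ?thesis by simp
qed

definition unit_indicator :: "nat set \<Rightarrow> nat \<Rightarrow> complex" where
  "unit_indicator A i = (if i \<in> A then complex_of_real (1 / sqrt (card A)) else 0)"

lemma sum_norm_unit_indicator_le:
  assumes "A \<subseteq> {..<n}"
  shows "(\<Sum>i<n. (cmod (unit_indicator A i))\<^sup>2) \<le> 1"
proof -
  have "(cmod (unit_indicator A i))\<^sup>2 = (if i \<in> A then 1 / card A else 0)" for i
    by (simp add: unit_indicator_def norm_divide power_divide)
  then have "(\<Sum>i<n. (cmod (unit_indicator A i))\<^sup>2) = (\<Sum>i<n. if i \<in> A then 1 / card A else 0)"
    by simp
  also have "\<dots> = (\<Sum>i\<in>{..<n} \<inter> A. 1 / card A)" by (rule sum.inter_restrict[symmetric]) simp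
  also have "\<dots> = card A / card A" by (simp add: Int_absorb1[OF assms])
  finally show ?thesis by simp
qed

lemma hankel_form_unit_indicators:
  fixes f G :: "nat \<Rightarrow> complex"
  assumes "0 < q" and D: "D \<subseteq> {2 * q<..4 * q}"
    and f0: "\<And>n. q < n \<Longrightarrow> n < 5 * q \<Longrightarrow> n \<notin> D \<Longrightarrow> f n = 0"
  shows "(\<Sum>i<4 * q + 1. \<Sum>j<4 * q + 1. unit_indicator {..<q} i
            * (f (i + j) * (if i \<in> {..<q} \<and> j \<in> {q<..4 * q} then G (i + j) else 0))
            * unit_indicator {q<..4 * q} j)
       = of_real (1 / sqrt 3) * (\<Sum>n\<in>D. f n * G n)"
proof -
  define I J where "I = {..<q}" and "J = {q<..4 * q}"
  define \<alpha> where "\<alpha> = complex_of_real (1 / sqrt q * (1 / sqrt (3 * q)))"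
  have "1 / sqrt q * (1 / sqrt (3 * q)) * q = 1 / sqrt 3"
    using \<open>0 < q\<close> by (simp add: real_sqrt_mult field_simps)
  then have \<alpha>: "\<alpha> * of_nat q = of_real (1 / sqrt 3)" unfolding \<alpha>_def by (metis of_real_mult of_real_of_nat_eq)
  have "card I = q" "card J = 3 * q" by (simp_all add: I_def J_def)
  then have "unit_indicator I i * (f (i + j) * (if i \<in> I \<and> j \<in> J then G (i + j) else 0)) * unit_indicator J j
      = (if i \<in> I \<and> j \<in> J then \<alpha> * (f (i + j) * G (i + j)) else 0)" for i j
    by (simp add: unit_indicator_def \<alpha>_def mult_ac)
  moreover have restrict: "{..<4 * q + 1} \<inter> I = {..<q}" "{..<4 * q + 1} \<inter> J = J"
    unfolding I_def J_def by auto
  ultimately have "(\<Sum>i<4 * q + 1. \<Sum>j<4 * q + 1. unit_indicator I i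
            * (f (i + j) * (if i \<in> I \<and> j \<in> J then G (i + j) else 0)) * unit_indicator J j)
      = (\<Sum>i<q. \<Sum>j\<in>J. \<alpha> * (f (i + j) * G (i + j)))"
    by (simp only: sum_sum_if_restrict finite_lessThan)
  also have "\<dots> = \<alpha> * (\<Sum>i<q. \<Sum>j\<in>J. f (i + j) * G (i + j))" by (simp add: sum_distrib_left)
  also have "\<dots> = \<alpha> * of_nat q * (\<Sum>n\<in>D. f n * G n)"
    unfolding J_def using sum_hankel_window[OF D, of "\<lambda>n. f n * G n"] f0 by (simp add: mult.assoc)
  finally show ?thesis unfolding \<alpha> I_def J_def .
qed

lemma cnj_sgn_mult_self: "cnj (sgn z) * z = complex_of_real (cmod z)"
proof (cases "z = 0")
  case False
  have "cnj (sgn z) * z = complex_of_real (inverse (cmod z)) * (z * cnj z)"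
    by (simp add: sgn_div_norm scaleR_conv_of_real mult_ac)
  also have "\<dots> = complex_of_real (inverse (cmod z) * (cmod z)\<^sup>2)"
    by (simp only: of_real_mult complex_norm_square)
  also have "inverse (cmod z) * (cmod z)\<^sup>2 = cmod z"
    using False by (simp add: power2_eq_square)
  finally show ?thesis .
qed simp

lemma hankel_schur_multiplier_norm_ge:
  fixes f :: "nat \<Rightarrow> complex"
  assumes "0 < q" and D: "D \<subseteq> {2 * q<..4 * q}"
    and f0: "\<And>n. q < n \<Longrightarrow> n < 5 * q \<Longrightarrow> n \<notin> D \<Longrightarrow> f n = 0"
    and K: "\<forall>T C. matrix_bound T C \<longrightarrow> matrix_bound (\<lambda>i j. f (i + j) * T i j) (K * C)"
  shows "(\<Sum>t<3 * q. cmod (\<Sum>n\<in>D. f n * fourier_char (3 * q) t n)) \<le> 3 * sqrt 3 * q * K"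
proof -
  (* T is a norm one Fourier matrix whose phases c t undo those of F t. Against the flat unit
     vectors on the rows [0, q) and the columns (q, 4q] the bilinear form only sees f on (q, 5q),
     where f is supported on D. *)
  define M where "M = 3 * q"
  let ?\<chi> = "fourier_char M"
  define F where "F t = (\<Sum>n\<in>D. f n * ?\<chi> t n)" for t
  define c where "c t = cnj (sgn (F t)) / of_nat M" for t
  define G where "G n = (\<Sum>t<M. c t * ?\<chi> t n)" for n
  define I where "I = {..<q}"
  define J where "J = {q<..4 * q}"
  define T where "T i j = (if i \<in> I \<and> j \<in> J then G (i + j) else 0)" for i j
  have "T = (\<lambda>i j. if i \<in> I \<and> j \<in> J then \<Sum>t<M. c t * ?\<chi> t i * ?\<chi> t j else 0)"
    by (simp add: fun_eq_iff T_def G_def mult.assoc fourier_char_add)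
  then have "matrix_bound T 1"
    using \<open>0 < q\<close> by (simp only:) (intro fourier_test_matrix_bound[where a = 0 and b = "q + 1"];
      auto simp: I_def J_def M_def c_def norm_divide norm_sgn divide_right_mono)
  then have "matrix_bound (\<lambda>i j. f (i + j) * T i j) K" using K by fastforce
  moreover have "(\<Sum>j<4 * q + 1. (cmod (unit_indicator J j))\<^sup>2) \<le> 1"
    and "(\<Sum>i<4 * q + 1. (cmod (unit_indicator I i))\<^sup>2) \<le> 1"
    by (intro sum_norm_unit_indicator_le; auto simp: I_def J_def)+
  ultimately have bound: "cmod (\<Sum>i<4 * q + 1. \<Sum>j<4 * q + 1.
      unit_indicator I i * (f (i + j) * T i j) * unit_indicator J j) \<le> K"
    unfolding matrix_bound_def by blast
  have "(\<Sum>n\<in>D. f n * G n) = (\<Sum>t<M. c t * F t)"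
    unfolding G_def F_def by (simp add: sum_distrib_left sum_distrib_right mult_ac sum.swap[of _ D])
  also have "\<dots> = of_real ((\<Sum>t<M. cmod (F t)) / M)"
    unfolding c_def by (simp add: cnj_sgn_mult_self sum_divide_distrib)
  moreover have "(\<Sum>i<4 * q + 1. \<Sum>j<4 * q + 1.
      unit_indicator I i * (f (i + j) * T i j) * unit_indicator J j)
      = of_real (1 / sqrt 3) * (\<Sum>n\<in>D. f n * G n)"
    unfolding T_def I_def J_def by (rule hankel_form_unit_indicators[OF \<open>0 < q\<close> D f0])
  ultimately have "(\<Sum>i<4 * q + 1. \<Sum>j<4 * q + 1.
      unit_indicator I i * (f (i + j) * T i j) * unit_indicator J j)
      = of_real (1 / sqrt 3 * ((\<Sum>t<M. cmod (F t)) / M))"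
    by simp
  with bound have "cmod (of_real (1 / sqrt 3 * ((\<Sum>t<M. cmod (F t)) / M)) :: complex) \<le> K"
    by simp
  then have "\<bar>1 / sqrt 3 * ((\<Sum>t<M. cmod (F t)) / M)\<bar> \<le> K" by (simp only: norm_of_real)
  then have "(\<Sum>t<M. cmod (F t)) / (sqrt 3 * M) \<le> K" by (simp add: sum_nonneg)
  then show ?thesis
    using \<open>0 < q\<close> unfolding F_def M_def by (simp add: field_simps)
qed

lemma not_dyadically_bounded_imp_large_block:
  assumes "\<not> dyadically_bounded S"
  shows "\<exists>k\<ge>k0. B \<le> card (S \<inter> dyadic_block (k + 2))"
proof -
  define L where "L = B + (\<Sum>k\<le>k0 + 1. card (S \<inter> dyadic_block k))"
  obtain k where k: "L < card (S \<inter> dyadic_block k)"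
    using assms unfolding dyadically_bounded_def by (meson not_le)
  have "k0 + 2 \<le> k"
  proof (rule ccontr)
    assume "\<not> k0 + 2 \<le> k"
    then have "card (S \<inter> dyadic_block k) \<le> (\<Sum>k\<le>k0 + 1. card (S \<inter> dyadic_block k))"
      by (intro member_le_sum) auto
    then show False using k unfolding L_def by simp
  qed
  then have "k = (k - 2) + 2" and "k0 \<le> k - 2" by simp_all
  then show ?thesis using k unfolding L_def by (metis le_add1 order.strict_implies_order order_trans)
qed

lemma ex_sparse_subsequence_large:
  fixes g :: "nat \<Rightarrow> nat"
  assumes "\<And>k0 B. \<exists>k\<ge>k0. B \<le> g k"
  obtains \<kappa> where "\<And>r. \<kappa> r + 2 \<le> \<kappa> (Suc r)" and "\<And>r. r \<le> g (\<kappa> r)"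
proof -
  have "\<exists>\<kappa>. \<forall>r. r \<le> g (\<kappa> r) \<and> \<kappa> r + 2 \<le> \<kappa> (Suc r)"
  proof (rule dependent_nat_choice)
    show "\<exists>k. 0 \<le> g k" by simp
    show "\<exists>k'. Suc r \<le> g k' \<and> k + 2 \<le> k'" for k r using assms[of "k + 2" "Suc r"] by blast
  qed
  then show thesis using that by blast
qed

lemma dyadic_blocks_separated:
  assumes gap: "\<And>r. \<kappa> r + 2 \<le> \<kappa> (Suc r)"
    and n: "n \<in> dyadic_block (\<kappa> r' + 2)" "2 ^ \<kappa> r < n" "n < 5 * 2 ^ \<kappa> r"
  shows "r' = r"
proof -
  have less: "(2::nat) ^ (\<kappa> a + 2) \<le> 2 ^ \<kappa> b" if "a < b" for a b
  proof -
    have "\<kappa> r \<le> \<kappa> (Suc r)" for r using gap[of r] by simp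
    from lift_Suc_mono_le[of \<kappa>, OF this] have "\<kappa> (Suc a) \<le> \<kappa> b" using that by simp
    then show ?thesis using gap[of a] by (intro power_increasing) simp_all
  qed
  have n': "2 * 2 ^ \<kappa> r' < n" "n \<le> 4 * 2 ^ \<kappa> r'"
    using n(1) unfolding dyadic_block_def by (simp_all add: power_add)
  show ?thesis
  proof (rule ccontr)
    assume "r' \<noteq> r"
    then consider "r' < r" | "r < r'" by linarith
    then show False
    proof cases
      case 1
      from less[OF this] show False using n n' by (simp add: power_add)
    next
      case 2
      from less[OF this] show False using n n' by (simp add: power_add)
    qed
  qed
qed

lemma not_dyadically_bounded_imp_separated_blocks:
  assumes "\<not> dyadically_bounded S"
  obtains D :: "nat \<Rightarrow> nat set" and q :: "nat \<Rightarrow> nat"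
  where "\<And>r. D r \<subseteq> S" and "\<And>r. 0 < q r" and "\<And>r. D r \<subseteq> {2 * q r<..4 * q r}"
    and "\<And>r. r \<le> card (D r)"
    and "\<And>n r r'. n \<in> D r' \<Longrightarrow> q r < n \<Longrightarrow> n < 5 * q r \<Longrightarrow> r' = r"
proof -
  from assms have "\<And>k0 B. \<exists>k\<ge>k0. B \<le> card (S \<inter> dyadic_block (k + 2))"
    by (rule not_dyadically_bounded_imp_large_block)
  then obtain \<kappa> where gap: "\<And>r. \<kappa> r + 2 \<le> \<kappa> (Suc r)"
    and large: "\<And>r. r \<le> card (S \<inter> dyadic_block (\<kappa> r + 2))"
    by (rule ex_sparse_subsequence_large) blast
  show thesis
  proof (rule that[of "\<lambda>r. S \<inter> dyadic_block (\<kappa> r + 2)" "\<lambda>r. 2 ^ \<kappa> r"])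
    show "S \<inter> dyadic_block (\<kappa> r + 2) \<subseteq> {2 * 2 ^ \<kappa> r<..4 * 2 ^ \<kappa> r}" for r
      unfolding dyadic_block_def by (auto simp: power_add)
    show "r' = r" if "n \<in> S \<inter> dyadic_block (\<kappa> r' + 2)" "2 ^ \<kappa> r < n" "n < 5 * 2 ^ \<kappa> r" for n r r'
      using dyadic_blocks_separated[where \<kappa> = \<kappa> and n = n and r' = r' and r = r, OF gap] that by simp
  qed (use large in auto)
qed

lemma card_le_hankel_schur_constant:
  fixes f :: "nat \<Rightarrow> complex" and K :: real
  assumes "0 < q" and D: "D \<subseteq> {2 * q<..4 * q}"
    and f0: "\<And>n. q < n \<Longrightarrow> n < 5 * q \<Longrightarrow> n \<notin> D \<Longrightarrow> f n = 0"
    and K: "\<forall>T C. matrix_bound T C \<longrightarrow> matrix_bound (\<lambda>i j. f (i + j) * T i j) (K * C)"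
    and signs: "\<And>n. n \<in> D \<Longrightarrow> f n = (if n \<in> A then 1 else -1)"
    and good: "(\<Sum>t<3 * q. sqrt ((\<Sum>n\<in>D. (cmod (fourier_char (3 * q) t n))\<^sup>2) / 3))
                \<le> (\<Sum>t<3 * q. cmod (signed_sum D A (fourier_char (3 * q) t)))"
  shows "real (card D) \<le> 9 * K\<^sup>2"
proof -
  have "signed_sum D A (fourier_char (3 * q) t) = (\<Sum>n\<in>D. f n * fourier_char (3 * q) t n)" for t
    unfolding signed_sum_def by (intro sum.cong refl) (simp add: signs)
  then have "3 * q * sqrt (card D / 3) \<le> (\<Sum>t<3 * q. cmod (\<Sum>n\<in>D. f n * fourier_char (3 * q) t n))"
    using good by simp
  also have "\<dots> \<le> 3 * q * (sqrt 3 * K)"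
    using hankel_schur_multiplier_norm_ge[OF \<open>0 < q\<close> D f0 K] by (simp add: mult_ac)
  finally have "sqrt (card D / 3) \<le> sqrt 3 * K" using \<open>0 < q\<close> by simp
  moreover have "0 \<le> sqrt (card D / 3)" by simp
  ultimately have "(sqrt (card D / 3))\<^sup>2 \<le> (sqrt 3 * K)\<^sup>2" by (rule power_mono)
  then show ?thesis by (simp add: power_mult_distrib)
qed

lemma schur_bounded_hankel_imp_dyadically_bounded:
  assumes "schur_bounded (hankel_pattern S)"
  shows "dyadically_bounded S"
proof (rule ccontr)
  assume "\<not> dyadically_bounded S"
  then obtain D q where D_S: "\<And>r. D r \<subseteq> S" and q: "\<And>r. 0 < q r"
    and D: "\<And>r. D r \<subseteq> {2 * q r<..4 * q r}" and large: "\<And>r. r \<le> card (D r)"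
    and D_unique: "\<And>n r r'. n \<in> D r' \<Longrightarrow> q r < n \<Longrightarrow> n < 5 * q r \<Longrightarrow> r' = r"
    by (rule not_dyadically_bounded_imp_separated_blocks) blast
  (* The signs are fixed on all blocks at once, before the multiplier constant K is known. *)
  have "\<forall>r. \<exists>A\<subseteq>D r. (\<Sum>t<3 * q r. sqrt ((\<Sum>n\<in>D r. (cmod (fourier_char (3 * q r) t n))\<^sup>2) / 3))
                    \<le> (\<Sum>t<3 * q r. cmod (signed_sum (D r) A (fourier_char (3 * q r) t)))"
    using D by (intro allI ex_signed_sums_large) (auto intro: finite_subset)
  from choice[OF this] obtain A where A_sub: "\<And>r. A r \<subseteq> D r"
    and A_good: "\<And>r. (\<Sum>t<3 * q r. sqrt ((\<Sum>n\<in>D r. (cmod (fourier_char (3 * q r) t n))\<^sup>2) / 3))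
        \<le> (\<Sum>t<3 * q r. cmod (signed_sum (D r) (A r) (fourier_char (3 * q r) t)))"
    by blast
  define f :: "nat \<Rightarrow> complex"
    where "f n = (if n \<in> (\<Union>r. A r) then 1 else if n \<in> (\<Union>r. D r) then -1 else 0)" for n
  have f_D: "f n = (if n \<in> A r then 1 else -1)" if "n \<in> D r" for n r
  proof -
    have "q r < n" "n < 5 * q r" using D[of r] q[of r] that by auto
    then have "n \<in> D r' \<Longrightarrow> r' = r" for r' using D_unique by blast
    then have "n \<in> (\<Union>r. A r) \<longleftrightarrow> n \<in> A r" using A_sub by blast
    moreover have "n \<in> (\<Union>r. D r)" using that by blast
    ultimately show ?thesis unfolding f_def by simp
  qed
  have f0: "f n = 0" if "q r < n" "n < 5 * q r" "n \<notin> D r" for n r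
  proof -
    have "n \<notin> D r'" for r' using D_unique[OF _ that(1,2)] that(3) by blast
    then have "n \<notin> (\<Union>r. A r)" "n \<notin> (\<Union>r. D r)" using A_sub by blast+
    then show ?thesis unfolding f_def by simp
  qed
  have "f n = 0" if "n \<notin> S" for n
  proof -
    have "n \<notin> (\<Union>r. D r)" "n \<notin> (\<Union>r. A r)" using that D_S A_sub by blast+
    then show ?thesis unfolding f_def by simp
  qed
  then have "\<And>i j. (i, j) \<notin> hankel_pattern S \<Longrightarrow> f (i + j) = 0" unfolding hankel_pattern_def by simp
  moreover have "\<And>i j. cmod (f (i + j)) \<le> 1" unfolding f_def by simp
  ultimately have "bounded_schur_multiplier (\<lambda>i j. f (i + j))"
    by (rule assms[unfolded schur_bounded_def, rule_format])
  then obtain K where K: "\<forall>T C. matrix_bound T C \<longrightarrow> matrix_bound (\<lambda>i j. f (i + j) * T i j) (K * C)"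
    unfolding bounded_schur_multiplier_def by blast
  obtain r :: nat where "9 * K\<^sup>2 < r" using reals_Archimedean2 by blast
  moreover have "real (card (D r)) \<le> 9 * K\<^sup>2"
    by (rule card_le_hankel_schur_constant[OF q D f0 K f_D A_good])
  ultimately show False using large[of r] by linarith
qed

lemma schur_bounded_hankel_iff_dyadically_bounded:
  "schur_bounded (hankel_pattern S) \<longleftrightarrow> dyadically_bounded S"
proof
  assume "dyadically_bounded S"
  from dyadically_bounded_imp_row_column_split[OF this]
  obtain R C where "hankel_pattern S = R \<union> C" "row_finite R" "column_finite C" by blast
  then show "schur_bounded (hankel_pattern S)" using schur_bounded_row_column_finite_Un by simp
qed (rule schur_bounded_hankel_imp_dyadically_bounded)

theorem proposition3p1:
  fixes S :: "nat set"
  shows "(schur_bounded (hankel_pattern S)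
            \<longleftrightarrow> (\<exists>R C. hankel_pattern S = R \<union> C \<and> row_finite R \<and> column_finite C))
       \<and> ((\<exists>R C. hankel_pattern S = R \<union> C \<and> row_finite R \<and> column_finite C)
            \<longleftrightarrow> (\<exists>M::nat. \<forall>k::nat. card {n \<in> S. 2 ^ k < 2 * n \<and> n \<le> 2 ^ k} \<le> M))
       \<and> ((\<exists>M::nat. \<forall>k::nat. card {n \<in> S. 2 ^ k < 2 * n \<and> n \<le> 2 ^ k} \<le> M)
            \<longleftrightarrow> (\<exists>F. finite F \<and> (\<forall>A\<in>F. lacunary A) \<and> S = \<Union>F))"
proof -
  have "{n \<in> S. 2 ^ k < 2 * n \<and> n \<le> 2 ^ k} = S \<inter> dyadic_block k" for k
    unfolding dyadic_block_def by blast
  then have "(\<exists>M::nat. \<forall>k::nat. card {n \<in> S. 2 ^ k < 2 * n \<and> n \<le> 2 ^ k} \<le> M) \<longleftrightarrow> dyadically_bounded S"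
    unfolding dyadically_bounded_def by simp
  then show ?thesis
    unfolding schur_bounded_hankel_iff_dyadically_bounded row_column_split_iff_dyadically_bounded
      dyadically_bounded_iff_lacunary_cover
    by simp
qed

end
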